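(* Let $G$ be a simple plane graph on $n\geq 2$ vertices that contains neither $K_4$ nor $C_5$ as a subgraph, and such that every maximal $2$-connected subgraph of $G$ has at most $4$ vertices. Then $e(G)\leq 2n-\frac{15}{7}$.
   Context: $K_4$ is the complete graph on $4$ vertices, $C_5$ the cycle on $5$ vertices; $e(G)$ is the number of edges of $G$. A maximal $2$-connected subgraph (a block) is understood in the usual sense, where a single edge (bridge) counts as a block on $2$ vertices. *)

theory Defs
  imports "HOL-Analysis.Analysis"
begin

definition simple_graph :: "'a set \<Rightarrow> 'a set set \<Rightarrow> bool" where
  "simple_graph V E \<longleftrightarrow> finite V \<and> (\<forall>e\<in>E. \<exists>u v. u \<in> V \<and> v \<in> V \<and> u \<noteq> v \<and> e = {u, v})"

definition plane_embedding :: "'a set \<Rightarrow> 'a set set \<Rightarrow> ('a \<Rightarrow> complex) \<Rightarrow> ('a set \<Rightarrow> real \<Rightarrow> complex) \<Rightarrow> bool" where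
  "plane_embedding V E f \<gamma> \<longleftrightarrow>
     inj_on f V \<and>
     (\<forall>e\<in>E. arc (\<gamma> e) \<and> {pathstart (\<gamma> e), pathfinish (\<gamma> e)} = f ` e
             \<and> path_image (\<gamma> e) \<inter> f ` V = f ` e) \<and>
     (\<forall>e\<in>E. \<forall>e'\<in>E. e \<noteq> e' \<longrightarrow> path_image (\<gamma> e) \<inter> path_image (\<gamma> e') \<subseteq> f ` (e \<inter> e'))"

definition plane_graph :: "'a set \<Rightarrow> 'a set set \<Rightarrow> bool" where
  "plane_graph V E \<longleftrightarrow> simple_graph V E \<and> (\<exists>f \<gamma>. plane_embedding V E f \<gamma>)"

definition has_K4 :: "'a set \<Rightarrow> 'a set set \<Rightarrow> bool" where
  "has_K4 V E \<longleftrightarrow> (\<exists>S. S \<subseteq> V \<and> card S = 4 \<and> (\<forall>u\<in>S. \<forall>v\<in>S. u \<noteq> v \<longrightarrow> {u, v} \<in> E))"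

definition has_C5 :: "'a set \<Rightarrow> 'a set set \<Rightarrow> bool" where
  "has_C5 V E \<longleftrightarrow> (\<exists>c :: nat \<Rightarrow> 'a. inj_on c {0..<5} \<and> c ` {0..<5} \<subseteq> V \<and>
       (\<forall>i<5. {c i, c ((i + 1) mod 5)} \<in> E))"

definition adj_on :: "'a set set \<Rightarrow> 'a set \<Rightarrow> ('a \<times> 'a) set" where
  "adj_on E S = {(u, v). u \<in> S \<and> v \<in> S \<and> {u, v} \<in> E}"

definition connected_on :: "'a set set \<Rightarrow> 'a set \<Rightarrow> bool" where
  "connected_on E S \<longleftrightarrow> (\<forall>u\<in>S. \<forall>v\<in>S. (u, v) \<in> (adj_on E S)\<^sup>*)"

text \<open>2-connected in the block sense: at least 2 vertices, connected, no cut vertex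
  (so a single edge counts).\<close>
definition two_connected_on :: "'a set set \<Rightarrow> 'a set \<Rightarrow> bool" where
  "two_connected_on E S \<longleftrightarrow> card S \<ge> 2 \<and> connected_on E S \<and> (\<forall>x\<in>S. connected_on E (S - {x}))"

definition is_block :: "'a set \<Rightarrow> 'a set set \<Rightarrow> 'a set \<Rightarrow> bool" where
  "is_block V E B \<longleftrightarrow> B \<subseteq> V \<and> two_connected_on E B \<and>
     (\<forall>B'. B \<subseteq> B' \<and> B' \<subseteq> V \<and> two_connected_on E B' \<longrightarrow> B' = B)"

end

theory Submission
  imports Defs
begin

text \<open>
  The hypotheses already force the sharper bound \<open>e(G) \<le> 2n - 3\<close>.  A \<open>K\<^sub>4\<close>-free graph on \<open>k \<in> {2,3,4}\<close> vertices has at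
  most \<open>2k - 3\<close> edges.  A vertex set that is not 2-connected splits into two proper
  parts sharing at most one vertex (a separation at a component or a cut vertex) such
  that every edge lies inside one of the parts; the bound \<open>2k - 3\<close> is additive over
  such splits, so induction on the number of vertices reduces everything to the
  2-connected pieces, which have at most 4 vertices.
\<close>

definition edges_within :: "'a set set \<Rightarrow> 'a set \<Rightarrow> 'a set set" where
  "edges_within E W = {e \<in> E. e \<subseteq> W}"

lemma finite_edges_within: "finite W \<Longrightarrow> finite (edges_within E W)"
  unfolding edges_within_def by (rule finite_subset[of _ "Pow W"]) auto

lemma edges_within_mono: "A \<subseteq> B \<Longrightarrow> edges_within E A \<subseteq> edges_within E B"
  unfolding edges_within_def by auto

lemma simple_graph_edgeE:
  assumes "simple_graph V E" "e \<in> E"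
  obtains p q where "e = {p, q}" "p \<noteq> q" "p \<in> V" "q \<in> V"
  using assms unfolding simple_graph_def by blast

lemma edges_within_card_le_1:
  assumes "simple_graph V E" "finite A" "card A \<le> 1"
  shows "edges_within E A = {}"
proof (rule ccontr)
  assume "edges_within E A \<noteq> {}"
  then obtain e where "e \<in> E" "e \<subseteq> A" unfolding edges_within_def by auto
  then obtain p q where "e = {p, q}" "p \<noteq> q" using simple_graph_edgeE[OF assms(1)] by metis
  then have "card e = 2" by simp
  with card_mono[OF assms(2) \<open>e \<subseteq> A\<close>] assms(3) show False by simp
qed

lemma not_connected_on_split:
  assumes sg: "simple_graph V E" and "\<not> connected_on E S"
  obtains A B where "S = A \<union> B" "A \<inter> B = {}" "A \<noteq> {}" "B \<noteq> {}"
    "edges_within E S \<subseteq> edges_within E A \<union> edges_within E B"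
proof -
  let ?R = "adj_on E S"
  obtain u v where uv: "u \<in> S" "v \<in> S" "(u, v) \<notin> ?R\<^sup>*"
    using assms(2) unfolding connected_on_def by blast
  define A where "A = {w \<in> S. (u, w) \<in> ?R\<^sup>*}"
  have closed: "q \<in> A" if "{p, q} \<in> E" "p \<in> A" "q \<in> S" for p q
  proof -
    have "(p, q) \<in> ?R" using that unfolding A_def adj_on_def by auto
    with that show ?thesis unfolding A_def by (auto intro: rtrancl_into_rtrancl)
  qed
  have "edges_within E S \<subseteq> edges_within E A \<union> edges_within E (S - A)"
  proof
    fix e assume e: "e \<in> edges_within E S"
    then have "e \<in> E" "e \<subseteq> S" unfolding edges_within_def by auto
    then obtain p q where pq: "e = {p, q}" using simple_graph_edgeE[OF sg] by metis
    have "{q, p} \<in> E" using \<open>e \<in> E\<close> pq by (simp add: insert_commute)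
    then show "e \<in> edges_within E A \<union> edges_within E (S - A)"
      using closed \<open>e \<in> E\<close> \<open>e \<subseteq> S\<close> pq unfolding edges_within_def by blast
  qed
  moreover have "u \<in> A" "v \<in> S - A" using uv unfolding A_def by auto
  ultimately show ?thesis using that[of A "S - A"] unfolding A_def by blast
qed

lemma not_two_connected_on_split:
  assumes sg: "simple_graph V E" and "card W \<ge> 2" and "\<not> two_connected_on E W"
  obtains A B where "W = A \<union> B" "A - B \<noteq> {}" "B - A \<noteq> {}" "card (A \<inter> B) \<le> 1"
    "edges_within E W \<subseteq> edges_within E A \<union> edges_within E B"
proof -
  consider "\<not> connected_on E W" | x where "x \<in> W" "\<not> connected_on E (W - {x})"
    using assms(2,3) unfolding two_connected_on_def by auto
  then show ?thesis
  proof cases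
    case 1
    with not_connected_on_split[OF sg] obtain A B where
      "W = A \<union> B" "A \<inter> B = {}" "A \<noteq> {}" "B \<noteq> {}"
      "edges_within E W \<subseteq> edges_within E A \<union> edges_within E B" by metis
    then show ?thesis using that[of A B] by auto
  next
    case (2 x)
    with not_connected_on_split[OF sg] obtain A B where
      AB: "W - {x} = A \<union> B" "A \<inter> B = {}" "A \<noteq> {}" "B \<noteq> {}" and
      cover: "edges_within E (W - {x}) \<subseteq> edges_within E A \<union> edges_within E B" by metis
    have "edges_within E W \<subseteq> edges_within E (A \<union> {x}) \<union> edges_within E (B \<union> {x})"
    proof
      fix e assume e: "e \<in> edges_within E W"
      then have "e \<in> E" "e \<subseteq> W" unfolding edges_within_def by auto
      then obtain p q where pq: "e = {p, q}" using simple_graph_edgeE[OF sg] by metis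
      show "e \<in> edges_within E (A \<union> {x}) \<union> edges_within E (B \<union> {x})"
      proof (cases "x \<in> e")
        case True
        then show ?thesis using \<open>e \<in> E\<close> \<open>e \<subseteq> W\<close> pq AB(1) unfolding edges_within_def by blast
      next
        case False
        then have "e \<in> edges_within E (W - {x})" using e unfolding edges_within_def by auto
        then show ?thesis using cover edges_within_mono[of A "A \<union> {x}" E]
            edges_within_mono[of B "B \<union> {x}" E] by blast
      qed
    qed
    moreover have "W = (A \<union> {x}) \<union> (B \<union> {x})" using AB(1) 2(1) by blast
    moreover have "(A \<union> {x}) - (B \<union> {x}) \<noteq> {}" "(B \<union> {x}) - (A \<union> {x}) \<noteq> {}"
      using AB by auto
    moreover have "card ((A \<union> {x}) \<inter> (B \<union> {x})) \<le> 1" using AB(2) by simp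
    ultimately show ?thesis using that[of "A \<union> {x}" "B \<union> {x}"] by blast
  qed
qed

lemma card_edges_within_le_choose:
  assumes sg: "simple_graph V E" and fin: "finite W"
  shows "card (edges_within E W) \<le> card W choose 2"
    and "card (edges_within E W) = card W choose 2 \<Longrightarrow> \<forall>u\<in>W. \<forall>v\<in>W. u \<noteq> v \<longrightarrow> {u, v} \<in> E"
proof -
  let ?P = "{B. B \<subseteq> W \<and> card B = 2}"
  have sub: "edges_within E W \<subseteq> ?P"
  proof
    fix e assume "e \<in> edges_within E W"
    then have "e \<in> E" "e \<subseteq> W" unfolding edges_within_def by auto
    then obtain p q where "e = {p, q}" "p \<noteq> q" using simple_graph_edgeE[OF sg] by metis
    with \<open>e \<subseteq> W\<close> show "e \<in> ?P" by simp
  qed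
  have finP: "finite ?P" using fin by auto
  have cardP: "card ?P = card W choose 2" using n_subsets[OF fin] by simp
  show "card (edges_within E W) \<le> card W choose 2" using card_mono[OF finP sub] cardP by simp
  assume "card (edges_within E W) = card W choose 2"
  then have "edges_within E W = ?P" using card_subset_eq[OF finP sub] cardP by simp
  then show "\<forall>u\<in>W. \<forall>v\<in>W. u \<noteq> v \<longrightarrow> {u, v} \<in> E" unfolding edges_within_def by auto
qed

lemma card_edges_within_small_K4_free:
  assumes sg: "simple_graph V E" and "\<not> has_K4 V E"
    and W: "W \<subseteq> V" "2 \<le> card W" "card W \<le> 4"
  shows "card (edges_within E W) + 3 \<le> 2 * card W"
proof -
  have fin: "finite W" using W(2) card.infinite by fastforce
  note le = card_edges_within_le_choose(1)[OF sg fin]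
  have "card W = 2 \<or> card W = 3 \<or> card W = 4" using W by auto
  then show ?thesis
  proof (elim disjE)
    assume "card W = 4"
    have "card (edges_within E W) \<noteq> card W choose 2"
      using card_edges_within_le_choose(2)[OF sg fin] assms(2) W(1) \<open>card W = 4\<close>
      unfolding has_K4_def by blast
    with le \<open>card W = 4\<close> show ?thesis by (simp add: numeral_eq_Suc)
  qed (use le in \<open>simp_all add: numeral_eq_Suc\<close>)
qed

lemma card_edges_within_le:
  assumes sg: "simple_graph V E" and K4: "\<not> has_K4 V E"
    and small: "\<And>S. S \<subseteq> V \<Longrightarrow> two_connected_on E S \<Longrightarrow> card S \<le> 4"
    and "W \<subseteq> V" "2 \<le> card W"
  shows "card (edges_within E W) + 3 \<le> 2 * card W"
  using assms(4,5)
proof (induction "card W" arbitrary: W rule: less_induct)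
  case less
  have fin: "finite W" using less.prems(2) card.infinite by fastforce
  show ?case
  proof (cases "two_connected_on E W")
    case True
    with less.prems small card_edges_within_small_K4_free[OF sg K4] show ?thesis by blast
  next
    case False
    with not_two_connected_on_split[OF sg less.prems(2)] obtain A B where
      AB: "W = A \<union> B" "A - B \<noteq> {}" "B - A \<noteq> {}" "card (A \<inter> B) \<le> 1" and
      cover: "edges_within E W \<subseteq> edges_within E A \<union> edges_within E B" by metis
    have fAB: "finite A" "finite B" using fin AB by auto
    have bound: "card (edges_within E X) + 3 \<le> 2 * card X \<or>
                   card X \<le> 1 \<and> card (edges_within E X) = 0"
      if "X \<subseteq> W" "card X < card W" for X
    proof (cases "2 \<le> card X")
      case True
      moreover have "X \<subseteq> V" using that(1) less.prems(1) by blast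
      ultimately show ?thesis using less.hyps[OF that(2)] by blast
    next
      case False
      then show ?thesis
        using edges_within_card_le_1[OF sg finite_subset[OF that(1) fin]] by simp
    qed
    have "A \<subset> W" "B \<subset> W" "A \<inter> B \<subset> A" "A \<inter> B \<subset> B" using AB(1-3) by auto
    then have lt: "card A < card W" "card B < card W"
      "card (A \<inter> B) < card A" "card (A \<inter> B) < card B"
      using fin fAB by (auto intro: psubset_card_mono)
    have "A \<subseteq> W" "B \<subseteq> W" using AB(1) by auto
    note IH = bound[OF \<open>A \<subseteq> W\<close> lt(1)] bound[OF \<open>B \<subseteq> W\<close> lt(2)]
    have "card A + card B = card W + card (A \<inter> B)"
      using card_Un_Int[OF fAB] AB(1) by simp
    moreover have "card (edges_within E W) \<le> card (edges_within E A) + card (edges_within E B)"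
    proof -
      have "card (edges_within E W) \<le> card (edges_within E A \<union> edges_within E B)"
        using cover fAB by (intro card_mono) (auto intro: finite_edges_within)
      also have "\<dots> \<le> card (edges_within E A) + card (edges_within E B)" by (rule card_Un_le)
      finally show ?thesis .
    qed
    ultimately show ?thesis using IH AB(4) lt(3,4) less.prems(2) by linarith
  qed
qed

lemma two_connected_on_subset_block:
  assumes "finite V" "S \<subseteq> V" "two_connected_on E S"
  obtains B where "is_block V E B" "S \<subseteq> B"
proof -
  define F where "F = {B'. S \<subseteq> B' \<and> B' \<subseteq> V \<and> two_connected_on E B'}"
  have "F \<subseteq> Pow V" unfolding F_def by blast
  then have "finite F" using assms(1) finite_subset by blast
  moreover have "S \<in> F" using assms unfolding F_def by simp
  ultimately obtain B where B: "B \<in> F" and max: "\<And>B'. B' \<in> F \<Longrightarrow> B \<subseteq> B' \<Longrightarrow> B = B'"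
    using finite_has_maximal[of F] by blast
  have "is_block V E B" unfolding is_block_def
  proof (intro conjI allI impI)
    show "B \<subseteq> V" "two_connected_on E B" using B unfolding F_def by simp_all
    fix B' assume "B \<subseteq> B' \<and> B' \<subseteq> V \<and> two_connected_on E B'"
    with B max[of B'] show "B' = B" unfolding F_def by auto
  qed
  moreover have "S \<subseteq> B" using B unfolding F_def by simp
  ultimately show ?thesis using that by blast
qed

theorem corollary2:
  fixes V :: "'a set" and E :: "'a set set"
  assumes "plane_graph V E"
    and "card V \<ge> 2"
    and "\<not> has_K4 V E"
    and "\<not> has_C5 V E"
    and "\<forall>B. is_block V E B \<longrightarrow> card B \<le> 4"
  shows "real (card E) \<le> 2 * real (card V) - 15 / 7"
proof -
  have sg: "simple_graph V E" using assms(1) unfolding plane_graph_def by simp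
  then have fin: "finite V" unfolding simple_graph_def by simp
  have small: "card S \<le> 4" if S: "S \<subseteq> V" "two_connected_on E S" for S
  proof -
    obtain B where "is_block V E B" "S \<subseteq> B"
      using two_connected_on_subset_block[OF fin S] .
    moreover have "finite B" using \<open>is_block V E B\<close> fin finite_subset
      unfolding is_block_def by blast
    ultimately show ?thesis using assms(5) card_mono order_trans by blast
  qed
  have "edges_within E V = E" using sg unfolding edges_within_def simple_graph_def by auto
  with card_edges_within_le[OF sg assms(3) small _ assms(2)]
  have "card E + 3 \<le> 2 * card V" by simp
  then show ?thesis by linarith
qed

end
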